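(* In any execution of $\mathtt{search}(\mathcal{G},T)$ (defined in the context), consider the lowest region of the decomposition, i.e. an iteration of the inner loop in which the computed region $Z$ equals the whole vertex set $V'$ of the current subgame $\mathcal{G}'$. Then extract-tangles$(Z,\sigma)$ returns at least one tangle.
   Context: Parity games: $\mathcal{G}=(V_0,V_1,E,\mathrm{pr})$, $V=V_0\cup V_1$ finite, partitioned into vertices of Even ($0$) and Odd ($1$); $E\subseteq V\times V$ with every vertex having a successor; $\mathrm{pr}:V\to\{0,\dots,d\}$. $E(u)=\{v:(u,v)\in E\}$, $\mathrm{pr}(U)=\max_{u\in U}\mathrm{pr}(u)$, $\mathrm{pr}^{-1}(p)$ the set of vertices of priority $p$, $\overline{\alpha}=1-\alpha$. A cycle is won by $\alpha$ if its highest priority has parity $\alpha$. A strategy of $\alpha$ is a partial function $\sigma$ on $V_\alpha$ with $\sigma(v)\in E(v)$. For $U\subseteq V$, $\mathcal{G}\cap U$ is the subgame with vertices $V\cap U$ and edges $E\cap(U\times U)$, and $\mathcal{G}\setminus U=\mathcal{G}\cap(V\setminus U)$. A $p$-tangle is a nonempty $U\subseteq V$ with $p=\mathrm{pr}(U)$ such that for $\alpha\equiv p\pmod 2$ there is a strategy $\sigma:U\cap V_\alpha\to U$ (witness strategy $\sigma_T(U)$) with $(U,E\cap(\sigma\cup((U\cap V_{\overline{\alpha}})\times U)))$ strongly connected and all its cycles won by $\alpha$ ("won by $\alpha$"). For a tangle $t$ won by $\alpha$ in a game with edge set $E$, $E_T(t)=\{v\notin t:\exists u\in t\cap V_{\overline{\alpha}},(u,v)\in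 E\}$. $T_\alpha$ denotes the tangles of $T$ won by $\alpha$; for a subgame $\mathcal{G}'$, $T\cap\mathcal{G}'$ denotes the tangles of $T$ contained in its vertex set. Tangle attractor: for a game $\mathcal{G}$ with vertices $V$, tangles $T$, player $\alpha$ and $A\subseteq V$, $\mathit{TAttr}^{\mathcal{G},T}_\alpha(A)$ is the least $Z\supseteq A$ containing every $v\in V_\alpha$ with $E(v)\cap Z\neq\emptyset$, every $v\in V_{\overline{\alpha}}$ with $E(v)\subseteq Z$, and every vertex of every $t\in T_\alpha$ with $\emptyset\neq E_T(t)\subseteq Z$ ($E_T$ computed in $\mathcal{G}$). It is computed iteratively together with a strategy $\sigma$ of $\alpha$ (initially empty): when an $\alpha$-vertex is added individually, $\sigma$ maps it to a successor already in $Z$; each $\alpha$-vertex of $A$ gets as $\sigma$-value a successor in $Z$ once one exists; when the vertices of a tangle $t$ are added, $\sigma(u):=\sigma_T(t)(u)$ for every $\alpha$-vertex $u\in t$ not yet in $\mathrm{dom}(\sigma)$. extract-tangles$(Z,\sigma)$, for a subgame $\mathcal{G}'=(V',E')$ with top priority $p$, $\alpha\equiv p$, region $Z\subseteq V'$ and strategy $\sigma$: let $Y_Z$ be the greatest $X\subseteq Z$ such that every $v\in X\cap V_{\overline{\alpha}}$ has $E'(v)\subseteq X$ and every $v\in X\cap V_\alpha$ has $\sigma(v)\in X$; let $H$ be the graph on $Y_Z$ with edges $(v,\sigma(v))$ for $v\in Y_Z\cap V_\alpha$ and $(v,w)\in E'$ for $v\in Y_Z\cap V_{\overline{\alpha}}$;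 return all bottom strongly connected components of $H$ that contain at least one edge of $H$, each with witness strategy $\sigma$ restricted to it. $\mathtt{search}(\mathcal{G},T)$ (with $T$ a set of tangles of $\mathcal{G}$): repeat forever: set $r:=\emptyset$ (a partial function $V\to\mathbb{N}$, the region function) and $Y:=\emptyset$; while $V\setminus\mathrm{dom}(r)\neq\emptyset$: let $\mathcal{G}':=\mathcal{G}\setminus\mathrm{dom}(r)$ with vertex set $V'$, $T':=T\cap\mathcal{G}'$, $p:=\mathrm{pr}(\mathcal{G}')$, $\alpha:=p\bmod 2$; compute $(Z,\sigma):=\mathit{TAttr}^{\mathcal{G}',T'}_\alpha(\mathrm{pr}^{-1}(p)\cap V')$ (the region of priority $p$); let $A:=$ extract-tangles$(Z,\sigma)$; if some $t\in A$ has $E_T(t)=\emptyset$ with $E_T$ computed in the full game $\mathcal{G}$, return $(T\cup Y,t)$; otherwise set $r(v):=p$ for all $v\in Z$ and $Y:=Y\cup A$. After the while-loop, set $T:=T\cup Y$. *)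

theory Defs
  imports Main
begin

record 'v pgame =
  V0 :: "'v set"
  V1 :: "'v set"
  Edges :: "('v \<times> 'v) set"
  pr :: "'v \<Rightarrow> nat"

definition verts :: "'v pgame \<Rightarrow> 'v set" where
  "verts G = V0 G \<union> V1 G"

definition valid_game :: "'v pgame \<Rightarrow> bool" where
  "valid_game G \<longleftrightarrow> finite (verts G) \<and> V0 G \<inter> V1 G = {}
     \<and> Edges G \<subseteq> verts G \<times> verts G
     \<and> (\<forall>v\<in>verts G. \<exists>w. (v, w) \<in> Edges G)"

text \<open>Vertices of player alpha (0 = Even, 1 = Odd).\<close>
definition Vp :: "'v pgame \<Rightarrow> nat \<Rightarrow> 'v set" where
  "Vp G a = (if a = 0 then V0 G else V1 G)"

definition opp :: "nat \<Rightarrow> nat" where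
  "opp a = 1 - a"

definition prio :: "'v pgame \<Rightarrow> 'v set \<Rightarrow> nat" where
  "prio G U = Max (pr G ` U)"

definition subgame :: "'v pgame \<Rightarrow> 'v set \<Rightarrow> 'v pgame" where
  "subgame G U = \<lparr>V0 = V0 G \<inter> U, V1 = V1 G \<inter> U, Edges = Edges G \<inter> (U \<times> U), pr = pr G\<rparr>"

definition is_cycle :: "('v \<times> 'v) set \<Rightarrow> 'v list \<Rightarrow> bool" where
  "is_cycle R xs \<longleftrightarrow> xs \<noteq> [] \<and>
     (\<forall>i < length xs. (xs ! i, xs ! ((i + 1) mod length xs)) \<in> R)"

definition tgraph :: "'v pgame \<Rightarrow> nat \<Rightarrow> 'v set \<Rightarrow> ('v \<rightharpoonup> 'v) \<Rightarrow> ('v \<times> 'v) set" where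
  "tgraph G a U s =
     {(u, w). u \<in> U \<inter> Vp G a \<and> s u = Some w}
     \<union> {(u, w). (u, w) \<in> Edges G \<and> u \<in> U \<inter> Vp G (opp a) \<and> w \<in> U}"

definition tangle :: "'v pgame \<Rightarrow> 'v set \<Rightarrow> ('v \<rightharpoonup> 'v) \<Rightarrow> bool" where
  "tangle G U s \<longleftrightarrow> (let a = prio G U mod 2; R = tgraph G a U s in
     U \<noteq> {} \<and> U \<subseteq> verts G \<and>
     dom s = U \<inter> Vp G a \<and>
     (\<forall>u \<in> dom s. \<exists>w. s u = Some w \<and> w \<in> U \<and> (u, w) \<in> Edges G) \<and>
     (\<forall>u \<in> U. \<forall>w \<in> U. (u, w) \<in> R\<^sup>*) \<and>
     (\<forall>xs. is_cycle R xs \<longrightarrow> prio G (set xs) mod 2 = a))"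

definition escapes :: "'v pgame \<Rightarrow> nat \<Rightarrow> 'v set \<Rightarrow> 'v set" where
  "escapes G a U = {v. v \<notin> U \<and> (\<exists>u \<in> U \<inter> Vp G (opp a). (u, v) \<in> Edges G)}"

type_synonym 'v tangles = "('v set \<times> ('v \<rightharpoonup> 'v)) set"

inductive tattr_step :: "'v pgame \<Rightarrow> 'v tangles \<Rightarrow> nat \<Rightarrow> 'v set
    \<Rightarrow> ('v set \<times> ('v \<rightharpoonup> 'v)) \<Rightarrow> ('v set \<times> ('v \<rightharpoonup> 'v)) \<Rightarrow> bool"
  for G T a A where
  add_alpha: "\<lbrakk> v \<in> Vp G a; v \<notin> Z; (v, w) \<in> Edges G; w \<in> Z \<rbrakk>
     \<Longrightarrow> tattr_step G T a A (Z, s) (insert v Z, s(v \<mapsto> w))"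
| add_opp: "\<lbrakk> v \<in> Vp G (opp a); v \<notin> Z; Edges G `` {v} \<subseteq> Z \<rbrakk>
     \<Longrightarrow> tattr_step G T a A (Z, s) (insert v Z, s)"
| add_tangle: "\<lbrakk> (U, t) \<in> T; prio G U mod 2 = a; \<not> U \<subseteq> Z;
       escapes G a U \<noteq> {}; escapes G a U \<subseteq> Z \<rbrakk>
     \<Longrightarrow> tattr_step G T a A (Z, s)
          (Z \<union> U, \<lambda>u. if u \<in> U \<inter> Vp G a \<and> s u = None then t u else s u)"
| set_target: "\<lbrakk> v \<in> A \<inter> Vp G a; s v = None; (v, w) \<in> Edges G; w \<in> Z \<rbrakk>
     \<Longrightarrow> tattr_step G T a A (Z, s) (Z, s(v \<mapsto> w))"

text \<open>(Z, s) is a possible result of computing TAttr^{G,T}_a(A) with its strategy.\<close>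
definition tattr :: "'v pgame \<Rightarrow> 'v tangles \<Rightarrow> nat \<Rightarrow> 'v set
    \<Rightarrow> 'v set \<Rightarrow> ('v \<rightharpoonup> 'v) \<Rightarrow> bool" where
  "tattr G T a A Z s \<longleftrightarrow>
     (tattr_step G T a A)\<^sup>*\<^sup>* (A, Map.empty) (Z, s) \<and>
     \<not> (\<exists>v \<in> Vp G a - Z. \<exists>w \<in> Z. (v, w) \<in> Edges G) \<and>
     \<not> (\<exists>v \<in> Vp G (opp a) - Z. Edges G `` {v} \<subseteq> Z) \<and>
     \<not> (\<exists>(U, t) \<in> T. prio G U mod 2 = a \<and> \<not> U \<subseteq> Z \<and>
          escapes G a U \<noteq> {} \<and> escapes G a U \<subseteq> Z) \<and>
     (\<forall>v \<in> A \<inter> Vp G a. (\<exists>w \<in> Z. (v, w) \<in> Edges G) \<longrightarrow> s v \<noteq> None)"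

definition ext_closed :: "'v pgame \<Rightarrow> nat \<Rightarrow> 'v set \<Rightarrow> ('v \<rightharpoonup> 'v) \<Rightarrow> 'v set \<Rightarrow> bool" where
  "ext_closed G a Z s X \<longleftrightarrow> X \<subseteq> Z \<and>
     (\<forall>v \<in> X \<inter> Vp G (opp a). Edges G `` {v} \<subseteq> X) \<and>
     (\<forall>v \<in> X \<inter> Vp G a. \<exists>w \<in> X. s v = Some w)"

text \<open>Y_Z: the greatest closed subset of Z (the union of all closed subsets).\<close>
definition ext_core :: "'v pgame \<Rightarrow> nat \<Rightarrow> 'v set \<Rightarrow> ('v \<rightharpoonup> 'v) \<Rightarrow> 'v set" where
  "ext_core G a Z s = \<Union> {X. ext_closed G a Z s X}"

definition ext_graph :: "'v pgame \<Rightarrow> nat \<Rightarrow> 'v set \<Rightarrow> ('v \<rightharpoonup> 'v) \<Rightarrow> ('v \<times> 'v) set" where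
  "ext_graph G a Z s = (let Y = ext_core G a Z s in
     {(v, w). v \<in> Y \<inter> Vp G a \<and> s v = Some w}
     \<union> {(v, w). (v, w) \<in> Edges G \<and> v \<in> Y \<inter> Vp G (opp a)})"

definition bottom_scc_with_edge :: "'v set \<Rightarrow> ('v \<times> 'v) set \<Rightarrow> 'v set \<Rightarrow> bool" where
  "bottom_scc_with_edge Y H C \<longleftrightarrow>
     C \<noteq> {} \<and> C \<subseteq> Y \<and>
     (\<forall>u \<in> C. \<forall>w \<in> C. (u, w) \<in> H\<^sup>*) \<and>
     (\<forall>u \<in> C. \<forall>v. (u, v) \<in> H\<^sup>* \<and> (v, u) \<in> H\<^sup>* \<longrightarrow> v \<in> C) \<and>
     (\<forall>u \<in> C. \<forall>w. (u, w) \<in> H \<longrightarrow> w \<in> C) \<and>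
     (\<exists>u \<in> C. \<exists>w \<in> C. (u, w) \<in> H)"

definition extract_tangles :: "'v pgame \<Rightarrow> nat \<Rightarrow> 'v set \<Rightarrow> ('v \<rightharpoonup> 'v) \<Rightarrow> 'v tangles" where
  "extract_tangles G a Z s =
     {(C, s |` C) | C. bottom_scc_with_edge (ext_core G a Z s) (ext_graph G a Z s) C}"

text \<open>search_state G T0 T r Y: the state (T, r, Y) at the head of an iteration of the
  inner while-loop is reachable in an execution of search(G, T0).\<close>
inductive search_state :: "'v pgame \<Rightarrow> 'v tangles \<Rightarrow> 'v tangles \<Rightarrow> ('v \<rightharpoonup> nat)
    \<Rightarrow> 'v tangles \<Rightarrow> bool"
  for G T0 where
  start: "search_state G T0 T0 Map.empty {}"
| inner: "\<lbrakk> search_state G T0 T r Y;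
     verts G - dom r \<noteq> {};
     G' = subgame G (verts G - dom r);
     T' = {t \<in> T. fst t \<subseteq> verts G'};
     p = prio G (verts G');
     a = p mod 2;
     tattr G' T' a {v \<in> verts G'. pr G v = p} Z s;
     A = extract_tangles G' a Z s;
     \<forall>t \<in> A. escapes G a (fst t) \<noteq> {} \<rbrakk>
   \<Longrightarrow> search_state G T0 T (r ++ (\<lambda>v. if v \<in> Z then Some p else None)) (Y \<union> A)"
| outer: "\<lbrakk> search_state G T0 T r Y; verts G - dom r = {} \<rbrakk>
   \<Longrightarrow> search_state G T0 (T \<union> Y) Map.empty {}"

end

theory Submission
  imports Defs
begin

(* Every tangle that search ever holds is closed under its witness strategy, and all cycles of
   its strategy graph are won by the player of its top priority. For the input tangles this is
   part of the definition. During a tangle attractor towards the top-priority vertices A, a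
   cycle of the strategy graph that avoids A can only be created inside an attracted tangle,
   and a cycle through A has the top priority; so the region's strategy graph has only cycles
   won by the region's player, and a bottom SCC extracted from it has top priority of that
   parity, which makes it closed under its strategy again.
   Closedness of the attracted tangles makes the attractor strategy total on the attracting
   player's vertices, and the remaining subgame never has dead ends. In the lowest region
   Z = V' the extraction graph on Z therefore has no sinks, and a finite graph without sinks
   has a bottom SCC containing an edge. *)

lemma Vp_subset_verts: "Vp G a \<subseteq> verts G"
  by (auto simp: Vp_def verts_def)

lemma verts_eq_Vp_Un_Vp_opp: "verts G = Vp G a \<union> Vp G (opp a)"
  by (auto simp: Vp_def opp_def verts_def)

lemma Vp_Int_Vp_opp: "V0 G \<inter> V1 G = {} \<Longrightarrow> Vp G a \<inter> Vp G (opp a) = {}"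
  by (auto simp: Vp_def opp_def)

lemma verts_subgame [simp]: "verts (subgame G W) = verts G \<inter> W"
  and Vp_subgame [simp]: "Vp (subgame G W) a = Vp G a \<inter> W"
  and V0_subgame [simp]: "V0 (subgame G W) = V0 G \<inter> W"
  and V1_subgame [simp]: "V1 (subgame G W) = V1 G \<inter> W"
  and Edges_subgame [simp]: "Edges (subgame G W) = Edges G \<inter> (W \<times> W)"
  and pr_subgame [simp]: "pr (subgame G W) = pr G"
  by (auto simp: subgame_def verts_def Vp_def)

lemma prio_subgame [simp]: "prio (subgame G W) U = prio G U"
  by (simp add: prio_def)

lemma tgraph_subgame: "U \<subseteq> W \<Longrightarrow> tgraph (subgame G W) a U s = tgraph G a U s"
  by (auto simp: tgraph_def)

lemma prio_eqI:
  assumes "finite X" "m \<in> X" "\<And>x. x \<in> X \<Longrightarrow> pr G x \<le> pr G m"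
  shows "prio G X = pr G m"
  unfolding prio_def using assms by (intro antisym Max.boundedI Max_ge) auto

lemma pr_le_prio: "finite X \<Longrightarrow> x \<in> X \<Longrightarrow> pr G x \<le> prio G X"
  unfolding prio_def by simp

section \<open>Cycles\<close>

definition cycles_won :: "'v pgame \<Rightarrow> nat \<Rightarrow> ('v \<times> 'v) set \<Rightarrow> bool" where
  "cycles_won G a R \<longleftrightarrow> (\<forall>xs. is_cycle R xs \<longrightarrow> prio G (set xs) mod 2 = a)"

lemma cycles_won_empty: "cycles_won G a {}"
  by (auto simp: cycles_won_def is_cycle_def)

lemma is_cycle_restrict:
  assumes "is_cycle R xs"
    and "\<And>x y. (x, y) \<in> R \<Longrightarrow> x \<in> set xs \<Longrightarrow> y \<in> set xs \<Longrightarrow> (x, y) \<in> Q"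
  shows "is_cycle Q xs"
  using assms by (auto simp: is_cycle_def)

lemma cycles_won_mono: "cycles_won G a R \<Longrightarrow> Q \<subseteq> R \<Longrightarrow> cycles_won G a Q"
  unfolding cycles_won_def by (metis is_cycle_restrict subsetD)

lemma is_cycle_set_subset_closed:
  assumes cyc: "is_cycle R xs" and closed: "\<And>x y. (x, y) \<in> R \<Longrightarrow> x \<in> S \<Longrightarrow> y \<in> S"
    and "x \<in> set xs" "x \<in> S"
  shows "set xs \<subseteq> S"
proof -
  define n where "n = length xs"
  obtain j where j: "j < n" "xs ! j = x"
    using \<open>x \<in> set xs\<close> by (auto simp: in_set_conv_nth n_def)
  have n: "n > 0" using j by simp
  have reach: "xs ! ((j + k) mod n) \<in> S" for k
  proof (induction k)
    case 0
    then show ?case using j \<open>x \<in> S\<close> by simp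
  next
    case (Suc k)
    have "(xs ! ((j + k) mod n), xs ! (((j + k) mod n + 1) mod n)) \<in> R"
      using cyc n by (simp add: is_cycle_def n_def)
    then show ?case using closed Suc by (simp add: mod_Suc_eq)
  qed
  show ?thesis
  proof
    fix y assume "y \<in> set xs"
    then obtain i where "i < n" "y = xs ! i" by (auto simp: in_set_conv_nth n_def)
    moreover have "(j + (n - j + i)) mod n = i" using j \<open>i < n\<close> by simp
    ultimately show "y \<in> S" using reach[of "n - j + i"] by simp
  qed
qed

text \<open>No edge of R' leaves Z, so a cycle of R' lies entirely inside or entirely outside Z.\<close>
lemma cycles_won_extend:
  assumes "cycles_won G a R" and "cycles_won G a Q"
    and inside: "\<And>x y. (x, y) \<in> R' \<Longrightarrow> x \<in> Z \<Longrightarrow> (x, y) \<in> R \<and> y \<in> Z"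
    and outside: "\<And>x y. (x, y) \<in> R' \<Longrightarrow> x \<notin> Z \<Longrightarrow> y \<notin> Z \<Longrightarrow> (x, y) \<in> Q"
  shows "cycles_won G a R'"
  unfolding cycles_won_def
proof (intro allI impI)
  fix xs assume cyc: "is_cycle R' xs"
  show "prio G (set xs) mod 2 = a"
  proof (cases "set xs \<inter> Z = {}")
    case True
    have "is_cycle Q xs"
    proof (rule is_cycle_restrict[OF cyc])
      fix x y assume "(x, y) \<in> R'" "x \<in> set xs" "y \<in> set xs"
      then show "(x, y) \<in> Q" using outside True by blast
    qed
    then show ?thesis using assms(2) by (simp add: cycles_won_def)
  next
    case False
    then have "set xs \<subseteq> Z" using is_cycle_set_subset_closed[OF cyc, of Z] inside by blast
    then have "is_cycle R xs" using inside by (blast intro: is_cycle_restrict[OF cyc])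
    then show ?thesis using assms(1) by (simp add: cycles_won_def)
  qed
qed

lemma is_cycle_set_subset_Domain: "is_cycle R xs \<Longrightarrow> set xs \<subseteq> Domain R"
proof
  fix x assume "is_cycle R xs" "x \<in> set xs"
  then obtain i where "i < length xs" "x = xs ! i" by (auto simp: in_set_conv_nth)
  with \<open>is_cycle R xs\<close> show "x \<in> Domain R" by (auto simp: is_cycle_def)
qed

lemma successively_nth: "successively P xs \<Longrightarrow> Suc i < length xs \<Longrightarrow> P (xs ! i) (xs ! Suc i)"
  by (induction P xs arbitrary: i rule: successively.induct) (auto simp: nth_Cons split: nat.split)

lemma rtrancl_imp_successively:
  assumes "(x, y) \<in> R\<^sup>*"
  shows "\<exists>xs. xs \<noteq> [] \<and> hd xs = x \<and> last xs = y \<and> successively (\<lambda>u v. (u, v) \<in> R) xs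
    \<and> set xs \<subseteq> R\<^sup>* `` {x}"
  using assms
proof (induction rule: converse_rtrancl_induct)
  case base
  show ?case by (intro exI[of _ "[y]"]) simp
next
  case (step x z)
  then obtain xs where "xs \<noteq> []" "hd xs = z" "last xs = y"
    "successively (\<lambda>u v. (u, v) \<in> R) xs" "set xs \<subseteq> R\<^sup>* `` {z}" by blast
  with step.hyps(1) show ?case
    by (intro exI[of _ "x # xs"])
      (auto simp: successively_Cons intro: converse_rtrancl_into_rtrancl)
qed

lemma is_cycle_if_successively:
  assumes "successively (\<lambda>u v. (u, v) \<in> R) xs" "xs \<noteq> []" "(last xs, hd xs) \<in> R"
  shows "is_cycle R xs"
  unfolding is_cycle_def
proof (intro conjI allI impI)
  fix i assume i: "i < length xs"
  show "(xs ! i, xs ! ((i + 1) mod length xs)) \<in> R"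
  proof (cases "Suc i < length xs")
    case True
    then show ?thesis using successively_nth[OF assms(1)] by simp
  next
    case False
    then have "i = length xs - 1" using i by simp
    then show ?thesis using assms(2,3) by (simp add: last_conv_nth hd_conv_nth)
  qed
qed fact

lemma trancl_imp_is_cycle:
  assumes "(m, m) \<in> R\<^sup>+"
  shows "\<exists>xs. is_cycle R xs \<and> m \<in> set xs \<and> set xs \<subseteq> R\<^sup>* `` {m}"
proof -
  obtain w where mw: "(m, w) \<in> R" and wm: "(w, m) \<in> R\<^sup>*"
    using tranclD[OF assms] by blast
  obtain xs where xs: "xs \<noteq> []" "hd xs = w" "last xs = m"
    "successively (\<lambda>u v. (u, v) \<in> R) xs" "set xs \<subseteq> R\<^sup>* `` {w}"
    using rtrancl_imp_successively[OF wm] by blast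
  have "is_cycle R xs"
    using is_cycle_if_successively[OF xs(4,1)] mw xs(2,3) by simp
  moreover have "set xs \<subseteq> R\<^sup>* `` {m}"
  proof
    fix x assume "x \<in> set xs"
    then have "(w, x) \<in> R\<^sup>*" using xs(5) by blast
    then show "x \<in> R\<^sup>* `` {m}" using converse_rtrancl_into_rtrancl[OF mw] by blast
  qed
  moreover have "m \<in> set xs" using last_in_set[OF xs(1)] unfolding xs(3) .
  ultimately show ?thesis by blast
qed

text \<open>The cycle through a vertex of maximal priority has the priority of the whole set.\<close>
lemma prio_mod_if_strongly_connected:
  assumes won: "cycles_won G a R" and "finite C"
    and conn: "C \<times> C \<subseteq> R\<^sup>*" and closed: "R `` C \<subseteq> C" and u: "u \<in> C" and uw: "(u, w) \<in> R"
  shows "prio G C mod 2 = a"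
proof -
  have "Max (pr G ` C) \<in> pr G ` C" using \<open>finite C\<close> u by (intro Max_in) auto
  then obtain m where m: "m \<in> C" "pr G m = Max (pr G ` C)" by auto
  have m_max: "pr G x \<le> pr G m" if "x \<in> C" for x using m that \<open>finite C\<close> by simp
  have "w \<in> C" using closed u uw by blast
  then have mu: "(m, u) \<in> R\<^sup>*" and wm: "(w, m) \<in> R\<^sup>*" using conn m(1) u by blast+
  have "(m, m) \<in> R\<^sup>+" by (rule trancl_rtrancl_trancl[OF rtrancl_into_trancl1[OF mu uw] wm])
  then obtain xs where xs: "is_cycle R xs" "m \<in> set xs" "set xs \<subseteq> R\<^sup>* `` {m}"
    by (blast dest: trancl_imp_is_cycle)
  have "set xs \<subseteq> C"
    using xs(3) Image_closed_trancl[OF closed] m(1) by blast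
  then have "prio G (set xs) = pr G m"
    using xs(2) m_max by (intro prio_eqI) auto
  moreover have "prio G C = pr G m"
    using \<open>finite C\<close> m(1) m_max by (rule prio_eqI)
  moreover have "prio G (set xs) mod 2 = a" using won xs(1) by (simp add: cycles_won_def)
  ultimately show ?thesis by simp
qed

section \<open>Attractor\<close>

text \<open>The part of the tangle property that search relies on; strong connectivity and the
  requirement that the strategy follows edges are dropped.\<close>
definition weak_tangle :: "'v pgame \<Rightarrow> 'v set \<Rightarrow> ('v \<rightharpoonup> 'v) \<Rightarrow> bool" where
  "weak_tangle G U t \<longleftrightarrow> U \<subseteq> verts G \<and>
     (\<forall>u \<in> U \<inter> Vp G (prio G U mod 2). \<exists>w \<in> U. t u = Some w) \<and>
     cycles_won G (prio G U mod 2) (tgraph G (prio G U mod 2) U t)"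

lemma tangle_imp_weak_tangle: "tangle G U t \<Longrightarrow> weak_tangle G U t"
  unfolding tangle_def weak_tangle_def cycles_won_def Let_def by (metis IntI domIff option.simps(3))

lemma weak_tangle_subgame: "U \<subseteq> W \<Longrightarrow> weak_tangle (subgame G W) U t \<longleftrightarrow> weak_tangle G U t"
  by (auto simp: weak_tangle_def tgraph_subgame cycles_won_def)

text \<open>Invariant of the tangle attractor towards A. In the last conjunct, cycles avoiding A
  can only be created inside an attracted tangle, whose cycles are won.\<close>
definition attr_inv :: "'v pgame \<Rightarrow> nat \<Rightarrow> 'v set \<Rightarrow> 'v set \<Rightarrow> ('v \<rightharpoonup> 'v) \<Rightarrow> bool" where
  "attr_inv G a A Z s \<longleftrightarrow> A \<subseteq> Z \<and> Z \<subseteq> verts G \<and> dom s \<subseteq> Z \<and> ran s \<subseteq> Z \<and>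
     Z \<inter> Vp G a - A \<subseteq> dom s \<and> Edges G `` (Z \<inter> Vp G (opp a) - A) \<subseteq> Z \<and>
     cycles_won G a {(v, w) \<in> tgraph G a Z s. v \<notin> A}"

lemma attr_invI:
  assumes "A \<subseteq> Z" "Z \<subseteq> verts G" "dom s \<subseteq> Z" "ran s \<subseteq> Z"
    and "Z \<inter> Vp G a - A \<subseteq> dom s" "Edges G `` (Z \<inter> Vp G (opp a) - A) \<subseteq> Z"
    and "cycles_won G a {(v, w) \<in> tgraph G a Z s. v \<notin> A}"
  shows "attr_inv G a A Z s"
  using assms by (simp add: attr_inv_def)

lemma attr_invD:
  assumes "attr_inv G a A Z s"
  shows "A \<subseteq> Z" "Z \<subseteq> verts G" "dom s \<subseteq> Z" "ran s \<subseteq> Z"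
    and "Z \<inter> Vp G a - A \<subseteq> dom s" "Edges G `` (Z \<inter> Vp G (opp a) - A) \<subseteq> Z"
    and "cycles_won G a {(v, w) \<in> tgraph G a Z s. v \<notin> A}"
  using assms by (simp_all add: attr_inv_def)

lemma attr_inv_init: "A \<subseteq> verts G \<Longrightarrow> attr_inv G a A A Map.empty"
  by (rule attr_invI) (auto simp: tgraph_def intro: cycles_won_mono[OF cycles_won_empty])

lemma attr_inv_cycles_won_extend:
  assumes inv: "attr_inv G a A Z s" and "cycles_won G a Q"
    and same: "\<And>x. x \<in> Z \<Longrightarrow> x \<notin> A \<Longrightarrow> s' x = s x"
    and new: "\<And>x y. (x, y) \<in> tgraph G a Z' s' \<Longrightarrow> x \<notin> Z \<Longrightarrow> y \<notin> Z \<Longrightarrow> (x, y) \<in> Q"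
  shows "cycles_won G a {(x, y) \<in> tgraph G a Z' s'. x \<notin> A}"
proof (rule cycles_won_extend[OF attr_invD(7)[OF inv] \<open>cycles_won G a Q\<close>, where Z = Z])
  fix x y assume "(x, y) \<in> {(x, y) \<in> tgraph G a Z' s'. x \<notin> A}" "x \<in> Z"
  then show "(x, y) \<in> {(x, y) \<in> tgraph G a Z s. x \<notin> A} \<and> y \<in> Z"
    using attr_invD(4,6)[OF inv] same[of x] by (auto simp: tgraph_def ran_def)
qed (use new in blast)

lemma attr_inv_add_alpha:
  assumes inv: "attr_inv G a A Z s" and disj: "V0 G \<inter> V1 G = {}"
    and v: "v \<in> Vp G a" "v \<notin> Z" and w: "w \<in> Z"
  shows "attr_inv G a A (insert v Z) (s(v \<mapsto> w))"
proof -
  have v_opp: "v \<notin> Vp G (opp a)" using v Vp_Int_Vp_opp[OF disj] by blast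
  show ?thesis
  proof (rule attr_invI)
    show "cycles_won G a {(x, y) \<in> tgraph G a (insert v Z) (s(v \<mapsto> w)). x \<notin> A}"
      by (rule attr_inv_cycles_won_extend[OF inv cycles_won_empty])
        (use v v_opp w in \<open>auto simp: tgraph_def\<close>)
  qed (use attr_invD[OF inv] v v_opp w Vp_subset_verts[of G a] in \<open>auto simp: ran_def\<close>)
qed

lemma attr_inv_add_opp:
  assumes inv: "attr_inv G a A Z s" and disj: "V0 G \<inter> V1 G = {}"
    and v: "v \<in> Vp G (opp a)" "v \<notin> Z" "Edges G `` {v} \<subseteq> Z"
  shows "attr_inv G a A (insert v Z) s"
proof -
  have v_a: "v \<notin> Vp G a" using v Vp_Int_Vp_opp[OF disj] by blast
  show ?thesis
  proof (rule attr_invI)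
    show "cycles_won G a {(x, y) \<in> tgraph G a (insert v Z) s. x \<notin> A}"
      by (rule attr_inv_cycles_won_extend[OF inv cycles_won_empty])
        (use v v_a in \<open>auto simp: tgraph_def\<close>)
  qed (use attr_invD[OF inv] v v_a Vp_subset_verts[of G "opp a"] in auto)
qed

lemma attr_inv_add_tangle:
  assumes inv: "attr_inv G a A Z s" and U: "weak_tangle G U t" "prio G U mod 2 = a"
    and esc: "escapes G a U \<subseteq> Z"
  shows "attr_inv G a A (Z \<union> U) (\<lambda>u. if u \<in> U \<inter> Vp G a \<and> s u = None then t u else s u)"
    (is "attr_inv G a A _ ?s")
proof (rule attr_invI)
  note Z = attr_invD[OF inv]
  have t: "\<exists>w \<in> U. t u = Some w" if "u \<in> U" "u \<in> Vp G a" for u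
    using U that by (auto simp: weak_tangle_def)
  have s_old: "?s x = s x" if "x \<in> Z" "x \<notin> A" for x
    using Z(5) that by auto
  have s_new: "?s x = t x" if "x \<in> U \<inter> Vp G a" "x \<notin> Z" for x
    using Z(3) that by auto
  show "cycles_won G a {(x, y) \<in> tgraph G a (Z \<union> U) ?s. x \<notin> A}"
  proof (rule attr_inv_cycles_won_extend[OF inv _ s_old])
    show "cycles_won G a (tgraph G a U t)" using U by (simp add: weak_tangle_def)
  next
    fix x y assume "(x, y) \<in> tgraph G a (Z \<union> U) ?s" "x \<notin> Z" "y \<notin> Z"
    then show "(x, y) \<in> tgraph G a U t"
      using s_new by (auto simp: tgraph_def)
  qed
  show "ran ?s \<subseteq> Z \<union> U"
  proof
    fix w assume "w \<in> ran ?s"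
    then obtain u where "?s u = Some w" by (auto simp: ran_def)
    then show "w \<in> Z \<union> U"
      using Z(4) t[of u] by (auto simp: ran_def split: if_splits)
  qed
  show "dom ?s \<subseteq> Z \<union> U"
    using Z(3) by (auto split: if_splits)
  show "(Z \<union> U) \<inter> Vp G a - A \<subseteq> dom ?s"
  proof
    fix v assume v: "v \<in> (Z \<union> U) \<inter> Vp G a - A"
    show "v \<in> dom ?s"
    proof (cases "v \<in> Z")
      case True
      then show ?thesis using s_old Z(5) v by auto
    next
      case False
      then show ?thesis using s_new t v by fastforce
    qed
  qed
  show "Edges G `` ((Z \<union> U) \<inter> Vp G (opp a) - A) \<subseteq> Z \<union> U"
    using Z(6) esc by (auto simp: escapes_def)
  show "A \<subseteq> Z \<union> U" using Z(1) by blast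
  show "Z \<union> U \<subseteq> verts G" using Z(2) U(1) by (auto simp: weak_tangle_def)
qed

lemma attr_inv_set_target:
  assumes inv: "attr_inv G a A Z s" and v: "v \<in> A" and w: "w \<in> Z"
  shows "attr_inv G a A Z (s(v \<mapsto> w))"
proof (rule attr_invI)
  note Z = attr_invD[OF inv]
  have "{(x, y) \<in> tgraph G a Z (s(v \<mapsto> w)). x \<notin> A} \<subseteq> {(x, y) \<in> tgraph G a Z s. x \<notin> A}"
    using v by (auto simp: tgraph_def split: if_splits)
  then show "cycles_won G a {(x, y) \<in> tgraph G a Z (s(v \<mapsto> w)). x \<notin> A}"
    using Z(7) by (rule cycles_won_mono[rotated])
qed (use attr_invD[OF inv] v w in \<open>auto simp: ran_def\<close>)

lemma attr_inv_step:
  assumes disj: "V0 G \<inter> V1 G = {}"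
    and T: "\<forall>(U, t) \<in> T. prio G U mod 2 = a \<longrightarrow> weak_tangle G U t"
    and step: "tattr_step G T a A (Z, s) (Z', s')" and inv: "attr_inv G a A Z s"
  shows "attr_inv G a A Z' s'"
  using step
proof cases
  case (add_alpha v w)
  then show ?thesis using attr_inv_add_alpha[OF inv disj] by simp
next
  case (add_opp v)
  then show ?thesis using attr_inv_add_opp[OF inv disj] by simp
next
  case (add_tangle U t)
  then show ?thesis using attr_inv_add_tangle[OF inv] T by auto
next
  case (set_target v w)
  then show ?thesis using attr_inv_set_target[OF inv] by simp
qed

lemma attr_inv_tattr:
  assumes disj: "V0 G \<inter> V1 G = {}" and A: "A \<subseteq> verts G"
    and T: "\<forall>(U, t) \<in> T. prio G U mod 2 = a \<longrightarrow> weak_tangle G U t"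
    and "tattr G T a A Z s"
  shows "attr_inv G a A Z s"
proof -
  have "(tattr_step G T a A)\<^sup>*\<^sup>* (A, Map.empty) (Z, s)"
    using \<open>tattr G T a A Z s\<close> unfolding tattr_def by (elim conjE)
  then show ?thesis
  proof (induction "(Z, s)" arbitrary: Z s rule: rtranclp_induct)
    case base
    then show ?case using attr_inv_init[OF A] by simp
  next
    case (step zs)
    obtain Z0 s0 where zs: "zs = (Z0, s0)" by fastforce
    show ?case
      using attr_inv_step[OF disj T, where Z = Z0 and s = s0] step zs by simp
  qed
qed

lemma attr_inv_cycles_won:
  assumes inv: "attr_inv G a A Z s"
    and top: "\<And>v. v \<in> Z \<Longrightarrow> pr G v \<le> p" "\<And>v. v \<in> A \<Longrightarrow> pr G v = p" and "p mod 2 = a"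
  shows "cycles_won G a (tgraph G a Z s)"
  unfolding cycles_won_def
proof (intro allI impI)
  fix xs assume cyc: "is_cycle (tgraph G a Z s) xs"
  have "set xs \<subseteq> Z"
    using is_cycle_set_subset_Domain[OF cyc] by (auto simp: tgraph_def)
  show "prio G (set xs) mod 2 = a"
  proof (cases "set xs \<inter> A = {}")
    case True
    then have "is_cycle {(v, w) \<in> tgraph G a Z s. v \<notin> A} xs"
      by (blast intro: is_cycle_restrict[OF cyc])
    then show ?thesis using attr_invD(7)[OF inv] by (simp add: cycles_won_def)
  next
    case False
    then obtain m where "m \<in> set xs" "m \<in> A" by blast
    then have "prio G (set xs) = p"
      using top \<open>set xs \<subseteq> Z\<close> by (subst prio_eqI[of _ m]) auto
    then show ?thesis using \<open>p mod 2 = a\<close> by simp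
  qed
qed

definition no_dead_ends :: "'v pgame \<Rightarrow> 'v set \<Rightarrow> bool" where
  "no_dead_ends G W \<longleftrightarrow> (\<forall>v \<in> W. \<exists>w \<in> W. (v, w) \<in> Edges G)"

lemma no_dead_ends_subgame: "X \<subseteq> W \<Longrightarrow> no_dead_ends (subgame G W) X \<longleftrightarrow> no_dead_ends G X"
  by (auto simp: no_dead_ends_def) (meson subsetD)+

lemma tattr_closedD:
  assumes "tattr G T a A Z s"
  shows "\<And>v w. v \<in> Vp G a \<Longrightarrow> (v, w) \<in> Edges G \<Longrightarrow> w \<in> Z \<Longrightarrow> v \<in> Z"
    and "\<And>v. v \<in> Vp G (opp a) \<Longrightarrow> Edges G `` {v} \<subseteq> Z \<Longrightarrow> v \<in> Z"
    and "\<And>v w. v \<in> A \<Longrightarrow> v \<in> Vp G a \<Longrightarrow> (v, w) \<in> Edges G \<Longrightarrow> w \<in> Z \<Longrightarrow> v \<in> dom s"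
  using assms unfolding tattr_def by blast+

lemma no_dead_ends_tattr_complement:
  assumes edges: "Edges G \<subseteq> verts G \<times> verts G" and nd: "no_dead_ends G (verts G)"
    and tattr: "tattr G T a A Z s"
  shows "no_dead_ends G (verts G - Z)"
  unfolding no_dead_ends_def
proof
  fix v assume v: "v \<in> verts G - Z"
  obtain w where w: "w \<in> verts G" "(v, w) \<in> Edges G"
    using nd v by (auto simp: no_dead_ends_def)
  show "\<exists>w \<in> verts G - Z. (v, w) \<in> Edges G"
  proof (cases "v \<in> Vp G a")
    case True
    then show ?thesis using tattr_closedD(1)[OF tattr] v w by blast
  next
    case False
    then have "v \<in> Vp G (opp a)" using v verts_eq_Vp_Un_Vp_opp[of G a] by blast
    then show ?thesis using tattr_closedD(2)[OF tattr] v edges by blast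
  qed
qed

section \<open>Extracting tangles\<close>

lemma ext_core_closed: "ext_closed G a Z s (ext_core G a Z s)"
  unfolding ext_closed_def
proof (intro conjI ballI)
  show "ext_core G a Z s \<subseteq> Z" unfolding ext_core_def ext_closed_def by blast
next
  fix v assume "v \<in> ext_core G a Z s \<inter> Vp G (opp a)"
  then obtain X where "ext_closed G a Z s X" "v \<in> X" "v \<in> Vp G (opp a)"
    unfolding ext_core_def by blast
  then show "Edges G `` {v} \<subseteq> ext_core G a Z s"
    unfolding ext_core_def ext_closed_def by blast
next
  fix v assume "v \<in> ext_core G a Z s \<inter> Vp G a"
  then obtain X where X: "ext_closed G a Z s X" "v \<in> X" "v \<in> Vp G a"
    unfolding ext_core_def by blast
  then obtain w where "w \<in> X" "s v = Some w" unfolding ext_closed_def by blast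
  then show "\<exists>w \<in> ext_core G a Z s. s v = Some w"
    using X(1) unfolding ext_core_def by blast
qed

lemma ext_core_subset: "ext_core G a Z s \<subseteq> Z"
  and ext_core_strategy: "v \<in> ext_core G a Z s \<Longrightarrow> v \<in> Vp G a \<Longrightarrow> \<exists>w \<in> ext_core G a Z s. s v = Some w"
  and ext_core_edges: "v \<in> ext_core G a Z s \<Longrightarrow> v \<in> Vp G (opp a) \<Longrightarrow> Edges G `` {v} \<subseteq> ext_core G a Z s"
  using ext_core_closed[of G a Z s] unfolding ext_closed_def by blast+

lemma mem_ext_graph_iff:
  "(v, w) \<in> ext_graph G a Z s \<longleftrightarrow> v \<in> ext_core G a Z s \<and>
     (v \<in> Vp G a \<and> s v = Some w \<or> (v, w) \<in> Edges G \<and> v \<in> Vp G (opp a))"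
  by (auto simp: ext_graph_def Let_def)

lemma mem_tgraph_iff:
  "(v, w) \<in> tgraph G a U s \<longleftrightarrow> v \<in> U \<and>
     (v \<in> Vp G a \<and> s v = Some w \<or> (v, w) \<in> Edges G \<and> v \<in> Vp G (opp a) \<and> w \<in> U)"
  by (auto simp: tgraph_def)

lemma ext_graph_subset_tgraph: "ext_graph G a Z s \<subseteq> tgraph G a Z s"
proof (rule subrelI)
  fix v w assume "(v, w) \<in> ext_graph G a Z s"
  then have v: "v \<in> ext_core G a Z s"
    and vw: "v \<in> Vp G a \<and> s v = Some w \<or> (v, w) \<in> Edges G \<and> v \<in> Vp G (opp a)"
    unfolding mem_ext_graph_iff by blast+
  have "v \<in> Z" using ext_core_subset[of G a Z s] v by blast
  moreover have "w \<in> Z" if "(v, w) \<in> Edges G" "v \<in> Vp G (opp a)"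
    using ext_core_edges[OF v that(2)] ext_core_subset[of G a Z s] that(1) by blast
  ultimately show "(v, w) \<in> tgraph G a Z s" using vw unfolding mem_tgraph_iff by blast
qed

lemma extract_tangles_weak_tangle:
  assumes won: "cycles_won G a (tgraph G a Z s)" and "finite Z" "Z \<subseteq> verts G"
    and "(C, t) \<in> extract_tangles G a Z s"
  shows "weak_tangle G C t"
proof -
  let ?Y = "ext_core G a Z s" and ?E = "ext_graph G a Z s"
  have scc: "bottom_scc_with_edge ?Y ?E C" and t: "t = s |` C"
    using assms(4) unfolding extract_tangles_def by auto
  have CY: "C \<subseteq> ?Y" and closed: "?E `` C \<subseteq> C" and conn: "C \<times> C \<subseteq> ?E\<^sup>*"
    using scc unfolding bottom_scc_with_edge_def by blast+
  obtain u w where "u \<in> C" "(u, w) \<in> ?E"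
    using scc unfolding bottom_scc_with_edge_def by blast
  have CZ: "C \<subseteq> Z" using CY ext_core_subset[of G a Z s] by blast
  have won_E: "cycles_won G a ?E" using won ext_graph_subset_tgraph[of G a Z s] by (rule cycles_won_mono)
  have par: "prio G C mod 2 = a"
    using finite_subset[OF CZ \<open>finite Z\<close>] conn closed \<open>u \<in> C\<close> \<open>(u, w) \<in> ?E\<close>
    by (rule prio_mod_if_strongly_connected[OF won_E])
  have strat: "\<exists>w \<in> C. t u = Some w" if u: "u \<in> C" "u \<in> Vp G a" for u
  proof -
    obtain w where w: "s u = Some w"
      using ext_core_strategy[of u G a Z s] CY u by blast
    then have "(u, w) \<in> ?E" using CY u unfolding mem_ext_graph_iff by blast
    then have "w \<in> C" using closed u(1) by blast
    then show ?thesis using w t u(1) by auto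
  qed
  have "tgraph G a C t \<subseteq> ?E"
  proof (rule subrelI)
    fix v w assume "(v, w) \<in> tgraph G a C t"
    then have "v \<in> C" "v \<in> Vp G a \<and> t v = Some w \<or> (v, w) \<in> Edges G \<and> v \<in> Vp G (opp a)"
      unfolding mem_tgraph_iff by blast+
    then show "(v, w) \<in> ?E" using CY t unfolding mem_ext_graph_iff by auto
  qed
  then have "cycles_won G a (tgraph G a C t)" using won_E by (rule cycles_won_mono[rotated])
  then show ?thesis
    using par strat CZ \<open>Z \<subseteq> verts G\<close> unfolding weak_tangle_def by auto
qed

lemma bottom_scc_with_edge_exists:
  assumes "finite Y" "Y \<noteq> {}" "R \<subseteq> Y \<times> Y" and succ: "\<And>v. v \<in> Y \<Longrightarrow> \<exists>w. (v, w) \<in> R"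
  shows "\<exists>C. bottom_scc_with_edge Y R C"
proof -
  have reach_Y: "R\<^sup>* `` {v} \<subseteq> Y" if "v \<in> Y" for v
    using Image_closed_trancl[of R Y] assms(3) that by blast
  obtain u where u: "u \<in> Y"
    and u_min: "\<And>v. v \<in> Y \<Longrightarrow> card (R\<^sup>* `` {u}) \<le> card (R\<^sup>* `` {v})"
  proof -
    obtain v0 where "v0 \<in> Y" using assms(2) by blast
    from ex_has_least_nat[of "\<lambda>v. v \<in> Y", OF this, of "\<lambda>v. card (R\<^sup>* `` {v})"]
    show ?thesis using that by blast
  qed
  define C where "C = R\<^sup>* `` {u}"
  have "finite C" using reach_Y[OF u] \<open>finite Y\<close> unfolding C_def by (rule finite_subset)
  have forward: "R\<^sup>* `` {v} \<subseteq> C" if "v \<in> C" for v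
    using that unfolding C_def by (auto intro: rtrancl_trans)
  have reaches_u: "(v, u) \<in> R\<^sup>*" if "v \<in> C" for v
  proof -
    have "v \<in> Y" using that reach_Y[OF u] unfolding C_def by blast
    then have "card C \<le> card (R\<^sup>* `` {v})" using u_min unfolding C_def by blast
    then have "R\<^sup>* `` {v} = C"
      using card_subset_eq[OF \<open>finite C\<close> forward[OF that]] card_mono[OF \<open>finite C\<close> forward[OF that]]
      by linarith
    then show ?thesis unfolding C_def by blast
  qed
  obtain w where uw: "(u, w) \<in> R" using succ[OF u] by blast
  have "u \<in> C" "w \<in> C" using uw unfolding C_def by blast+
  moreover have "C \<subseteq> Y" using reach_Y[OF u] unfolding C_def .
  moreover have "(x, y) \<in> R\<^sup>*" if "x \<in> C" "y \<in> C" for x y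
    using reaches_u[OF that(1)] that(2) unfolding C_def by (blast intro: rtrancl_trans)
  moreover have "y \<in> C" if "x \<in> C" "(x, y) \<in> R\<^sup>*" for x y
    using forward[OF that(1)] that(2) by blast
  ultimately have "bottom_scc_with_edge Y R C"
    unfolding bottom_scc_with_edge_def using uw by blast
  then show ?thesis by blast
qed

lemma extract_tangles_nonempty:
  assumes "finite Z" "Z \<noteq> {}" "Z \<subseteq> verts G" and closed: "ext_closed G a Z s Z"
    and succ: "\<And>v. v \<in> Z \<Longrightarrow> \<exists>w. (v, w) \<in> Edges G"
  shows "extract_tangles G a Z s \<noteq> {}"
proof -
  have strat: "\<And>v. v \<in> Z \<Longrightarrow> v \<in> Vp G a \<Longrightarrow> \<exists>w \<in> Z. s v = Some w"
    and edges: "\<And>v. v \<in> Z \<Longrightarrow> v \<in> Vp G (opp a) \<Longrightarrow> Edges G `` {v} \<subseteq> Z"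
    using closed unfolding ext_closed_def by blast+
  have "Z \<subseteq> ext_core G a Z s" using closed unfolding ext_core_def by blast
  then have core: "ext_core G a Z s = Z" using ext_core_subset[of G a Z s] by blast
  have "ext_graph G a Z s \<subseteq> Z \<times> Z"
  proof (rule subrelI)
    fix v w assume "(v, w) \<in> ext_graph G a Z s"
    then have v: "v \<in> Z" and "v \<in> Vp G a \<and> s v = Some w \<or> (v, w) \<in> Edges G \<and> v \<in> Vp G (opp a)"
      unfolding mem_ext_graph_iff core by blast+
    then have "w \<in> Z" using strat[OF v] edges[OF v] by auto
    with v show "(v, w) \<in> Z \<times> Z" by blast
  qed
  moreover have "\<exists>w. (v, w) \<in> ext_graph G a Z s" if v: "v \<in> Z" for v
  proof (cases "v \<in> Vp G a")
    case True
    then obtain w where "s v = Some w" using strat[OF v] by blast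
    then show ?thesis using True v unfolding mem_ext_graph_iff core by blast
  next
    case False
    then have "v \<in> Vp G (opp a)"
      using v \<open>Z \<subseteq> verts G\<close> verts_eq_Vp_Un_Vp_opp[of G a] by blast
    then show ?thesis using succ[OF v] v unfolding mem_ext_graph_iff core by blast
  qed
  ultimately obtain C where "bottom_scc_with_edge Z (ext_graph G a Z s) C"
    using bottom_scc_with_edge_exists[OF \<open>finite Z\<close> \<open>Z \<noteq> {}\<close>] by blast
  then have "(C, s |` C) \<in> extract_tangles G a Z s"
    unfolding extract_tangles_def core by blast
  then show ?thesis by blast
qed

section \<open>Search\<close>

lemma valid_game_no_dead_ends: "valid_game G \<Longrightarrow> no_dead_ends G (verts G)"
  unfolding valid_game_def no_dead_ends_def by blast

locale search_region =
  fixes G :: "'v pgame" and T :: "'v tangles" and r :: "'v \<rightharpoonup> nat"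
    and G' :: "'v pgame" and T' :: "'v tangles" and p a :: nat
    and Z :: "'v set" and s :: "'v \<rightharpoonup> 'v"
  assumes valid: "valid_game G"
    and weak_tangles: "\<forall>(U, t) \<in> T. weak_tangle G U t"
    and remaining_no_dead_ends: "no_dead_ends G (verts G - dom r)"
    and G': "G' = subgame G (verts G - dom r)"
    and T': "T' = {t \<in> T. fst t \<subseteq> verts G'}"
    and p: "p = prio G (verts G')"
    and a: "a = p mod 2"
    and tattr: "tattr G' T' a {v \<in> verts G'. pr G v = p} Z s"
begin

lemma verts_G': "verts G' = verts G - dom r"
  using G' by auto

lemma finite_verts_G': "finite (verts G')"
  using valid verts_G' by (simp add: valid_game_def)

lemma no_dead_ends_G': "no_dead_ends G' (verts G')"
  using remaining_no_dead_ends G' verts_G' no_dead_ends_subgame[of "verts G - dom r"] by simp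

lemma attr_inv: "attr_inv G' a {v \<in> verts G'. pr G v = p} Z s"
proof (rule attr_inv_tattr[OF _ _ _ tattr])
  show "V0 G' \<inter> V1 G' = {}" using valid G' by (auto simp: valid_game_def)
  show "\<forall>(U, t) \<in> T'. prio G' U mod 2 = a \<longrightarrow> weak_tangle G' U t"
    using weak_tangles G' T' verts_G' weak_tangle_subgame by fastforce
qed auto

lemma cycles_won: "cycles_won G' a (tgraph G' a Z s)"
proof (rule attr_inv_cycles_won[OF attr_inv])
  fix v assume "v \<in> Z"
  then have "v \<in> verts G'" using attr_invD(2)[OF attr_inv] by blast
  then show "pr G' v \<le> p" using p G' finite_verts_G' by (simp add: pr_le_prio)
qed (use G' a in auto)

lemma extracted_weak_tangles: "\<forall>(C, t) \<in> extract_tangles G' a Z s. weak_tangle G C t"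
proof clarify
  fix C t assume Ct: "(C, t) \<in> extract_tangles G' a Z s"
  have ZV: "Z \<subseteq> verts G'" using attr_invD(2)[OF attr_inv] .
  have "weak_tangle G' C t"
    using extract_tangles_weak_tangle[OF cycles_won finite_subset[OF ZV finite_verts_G'] ZV Ct] .
  moreover have "C \<subseteq> verts G - dom r"
    using calculation verts_G' by (simp add: weak_tangle_def)
  ultimately show "weak_tangle G C t" using G' weak_tangle_subgame by blast
qed

lemma no_dead_ends_after_region: "no_dead_ends G (verts G - (Z \<union> dom r))"
proof -
  have "Edges G' \<subseteq> verts G' \<times> verts G'" using valid G' by (auto simp: valid_game_def)
  then have "no_dead_ends G' (verts G' - Z)"
    using no_dead_ends_G' tattr by (rule no_dead_ends_tattr_complement)
  moreover have "verts G' - Z = verts G - (Z \<union> dom r)" using verts_G' by blast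
  ultimately show ?thesis
    using G' no_dead_ends_subgame[of "verts G - (Z \<union> dom r)" "verts G - dom r" G] by auto
qed

text \<open>In the lowest region every vertex of the attracting player has a strategy move: off the
  target set by the attractor invariant, on it because the vertex has some successor in Z.\<close>
lemma lowest_region_closed:
  assumes Z: "Z = verts G'"
  shows "ext_closed G' a Z s Z"
  unfolding ext_closed_def
proof (intro conjI ballI)
  fix v assume v: "v \<in> Z \<inter> Vp G' a"
  have "v \<in> dom s"
  proof (cases "pr G v = p")
    case True
    obtain w where "w \<in> Z" "(v, w) \<in> Edges G'"
      using no_dead_ends_G' v Z by (auto simp: no_dead_ends_def)
    then show ?thesis using tattr_closedD(3)[OF tattr] v Z True by blast
  next
    case False
    then show ?thesis using attr_invD(5)[OF attr_inv] v Z by blast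
  qed
  then show "\<exists>w \<in> Z. s v = Some w" using attr_invD(4)[OF attr_inv] by (auto simp: ran_def)
next
  fix v assume "v \<in> Z \<inter> Vp G' (opp a)"
  show "Edges G' `` {v} \<subseteq> Z" using Z G' by auto
qed simp

end

lemma search_state_invariant:
  assumes valid: "valid_game G" and T0: "\<forall>(U, t) \<in> T0. tangle G U t"
    and "search_state G T0 T r Y"
  shows "(\<forall>(U, t) \<in> T \<union> Y. weak_tangle G U t) \<and> no_dead_ends G (verts G - dom r)"
  using \<open>search_state G T0 T r Y\<close>
proof (induction rule: search_state.induct)
  case start
  show ?case using T0 tangle_imp_weak_tangle valid_game_no_dead_ends[OF valid] by fastforce
next
  case (inner T r Y G' T' p a Z s A)
  then interpret search_region G T r G' T' p a Z s
    by unfold_locales (use valid in auto)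
  have "dom (r ++ (\<lambda>v. if v \<in> Z then Some p else None)) = Z \<union> dom r"
    by (auto simp: dom_map_add split: if_splits)
  then show ?case
    using inner extracted_weak_tangles no_dead_ends_after_region by auto
next
  case (outer T r Y)
  then show ?case using valid_game_no_dead_ends[OF valid] by auto
qed

theorem lemma6:
  fixes G :: "'v pgame" and T0 T Y :: "'v tangles" and r :: "'v \<rightharpoonup> nat"
    and G' :: "'v pgame" and T' :: "'v tangles" and p a :: nat
    and Z :: "'v set" and s :: "'v \<rightharpoonup> 'v"
  assumes "valid_game G"
    and "\<forall>(U, t) \<in> T0. tangle G U t"
    and "search_state G T0 T r Y"
    and "verts G - dom r \<noteq> {}"
    and "G' = subgame G (verts G - dom r)"
    and "T' = {t \<in> T. fst t \<subseteq> verts G'}"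
    and "p = prio G (verts G')"
    and "a = p mod 2"
    and "tattr G' T' a {v \<in> verts G'. pr G v = p} Z s"
    and "Z = verts G'"
  shows "extract_tangles G' a Z s \<noteq> {}"
proof -
  have "(\<forall>(U, t) \<in> T \<union> Y. weak_tangle G U t) \<and> no_dead_ends G (verts G - dom r)"
    using search_state_invariant assms(1-3) .
  then interpret search_region G T r G' T' p a Z s
    by unfold_locales (use assms(1,5-9) in auto)
  show ?thesis
  proof (rule extract_tangles_nonempty)
    show "finite Z" "Z \<subseteq> verts G'" using finite_verts_G' assms(10) by auto
    show "Z \<noteq> {}" using assms(4,10) verts_G' by simp
    show "ext_closed G' a Z s Z" using lowest_region_closed[OF assms(10)] .
    show "\<exists>w. (v, w) \<in> Edges G'" if "v \<in> Z" for v
      using no_dead_ends_G' that assms(10) by (auto simp: no_dead_ends_def)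
  qed
qed

end
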